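(* Let $k$ be a commutative Noetherian ring and let $R$ be a reduced commutative $k$-algebra that is finitely generated as a $k$-module. Then $\mathrm{Aut}_{k\text{-alg}}(R)$ is a finite group.
   Context: Reduced means no nonzero nilpotent elements. *)

theory Defs
  imports Main
begin

definition is_ring_hom :: "('a::comm_ring_1 \<Rightarrow> 'b::comm_ring_1) \<Rightarrow> bool" where
  "is_ring_hom f \<longleftrightarrow> f 1 = 1 \<and> (\<forall>x y. f (x + y) = f x + f y) \<and> (\<forall>x y. f (x * y) = f x * f y)"

definition is_ideal :: "'a::comm_ring_1 set \<Rightarrow> bool" where
  "is_ideal I \<longleftrightarrow> 0 \<in> I \<and> (\<forall>x\<in>I. \<forall>y\<in>I. x + y \<in> I) \<and> (\<forall>r. \<forall>x\<in>I. r * x \<in> I)"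

definition noetherian_ring :: "'a::comm_ring_1 itself \<Rightarrow> bool" where
  "noetherian_ring _ \<longleftrightarrow> (\<forall>I::'a set. is_ideal I \<longrightarrow>
     (\<exists>F. finite F \<and> F \<subseteq> I \<and> I = {\<Sum>x\<in>F. c x * x | c. True}))"

definition reduced_ring :: "'a::comm_ring_1 itself \<Rightarrow> bool" where
  "reduced_ring _ \<longleftrightarrow> (\<forall>(x::'a) (n::nat). x ^ n = 0 \<longrightarrow> x = 0)"

text \<open>R, a k-algebra via the structure map phi, is finitely generated as a k-module.\<close>
definition finite_module_over :: "('k::comm_ring_1 \<Rightarrow> 'r::comm_ring_1) \<Rightarrow> bool" where
  "finite_module_over phi \<longleftrightarrow> (\<exists>S. finite S \<and> (\<forall>r. \<exists>c. r = (\<Sum>s\<in>S. phi (c s) * s)))"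

definition alg_auts :: "('k::comm_ring_1 \<Rightarrow> 'r::comm_ring_1) \<Rightarrow> ('r \<Rightarrow> 'r) set" where
  "alg_auts phi = {f. bij f \<and> is_ring_hom f \<and> (\<forall>c x. f (phi c * x) = phi c * f x)}"

end

theory Submission
  imports Defs "HOL-Computational_Algebra.Polynomial" "HOL-Library.FuncSet"
begin

text \<open>Every \<open>k\<close>-submodule of \<open>R\<close> is finitely generated, so \<open>R\<close> satisfies the maximum
  condition on submodules: \<open>R\<close> is a Noetherian ring, and each \<open>s \<in> R\<close> is integral over \<open>k\<close>
  because the chain of spans of \<open>1, s, s\<^sup>2, \<dots>\<close> stabilises. In the reduced Noetherian
  ring \<open>R\<close>, \<open>0\<close> is a finite intersection of prime ideals, and modulo a prime a monic polynomial
  has only finitely many root classes; hence a monic polynomial has finitely many roots in \<open>R\<close>.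
  An automorphism is determined by its values on finitely many module generators, and it sends
  each generator to a root of that generator's integral equation.\<close>

section \<open>Submodules over a ring homomorphism\<close>

lemma ring_hom_add: "is_ring_hom f \<Longrightarrow> f (x + y) = f x + f y"
  unfolding is_ring_hom_def by blast

lemma ring_hom_mult: "is_ring_hom f \<Longrightarrow> f (x * y) = f x * f y"
  unfolding is_ring_hom_def by blast

lemma ring_hom_one: "is_ring_hom f \<Longrightarrow> f 1 = 1"
  unfolding is_ring_hom_def by blast

lemma ring_hom_zero: "is_ring_hom f \<Longrightarrow> f 0 = 0"
  using ring_hom_add[of f 0 0] by simp

lemma ring_hom_uminus: "is_ring_hom f \<Longrightarrow> f (- x) = - f x"
  using ring_hom_add[of f "- x" x] ring_hom_zero[of f] by (simp add: eq_neg_iff_add_eq_0)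

lemma ring_hom_sum: "is_ring_hom f \<Longrightarrow> f (sum g A) = (\<Sum>a\<in>A. f (g a))"
  by (induction A rule: infinite_finite_induct) (auto simp: ring_hom_zero ring_hom_add)

lemma ring_hom_power: "is_ring_hom f \<Longrightarrow> f (x ^ n) = f x ^ n"
  by (induction n) (auto simp: ring_hom_one ring_hom_mult)

definition is_submodule :: "('k::comm_ring_1 \<Rightarrow> 'r::comm_ring_1) \<Rightarrow> 'r set \<Rightarrow> bool" where
  "is_submodule phi N \<longleftrightarrow> 0 \<in> N \<and> (\<forall>x\<in>N. \<forall>y\<in>N. x + y \<in> N) \<and> (\<forall>c. \<forall>x\<in>N. phi c * x \<in> N)"

definition span_over :: "('k::comm_ring_1 \<Rightarrow> 'r::comm_ring_1) \<Rightarrow> 'r set \<Rightarrow> 'r set" where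
  "span_over phi F = {\<Sum>x\<in>F. phi (c x) * x | c. True}"

definition noetherian_module :: "('k::comm_ring_1 \<Rightarrow> 'r::comm_ring_1) \<Rightarrow> bool" where
  "noetherian_module phi \<longleftrightarrow>
     (\<forall>N. is_submodule phi N \<longrightarrow> (\<exists>F. finite F \<and> F \<subseteq> N \<and> N = span_over phi F))"

lemma span_overI: "x = (\<Sum>z\<in>F. phi (c z) * z) \<Longrightarrow> x \<in> span_over phi F"
  unfolding span_over_def by blast

lemma is_submodule_sum:
  "is_submodule phi N \<Longrightarrow> (\<And>a. a \<in> A \<Longrightarrow> g a \<in> N) \<Longrightarrow> sum g A \<in> N"
  unfolding is_submodule_def by (induction A rule: infinite_finite_induct) auto

lemma is_submodule_Int: "is_submodule phi M \<Longrightarrow> is_submodule phi N \<Longrightarrow> is_submodule phi (M \<inter> N)"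
  unfolding is_submodule_def by blast

lemma is_submodule_diff:
  assumes "is_ring_hom phi" "is_submodule phi N" "x \<in> N" "y \<in> N"
  shows "x - y \<in> N"
proof -
  have "phi (- 1) * y \<in> N" using assms(2,4) unfolding is_submodule_def by blast
  then have "- y \<in> N" using assms(1) by (simp add: ring_hom_uminus ring_hom_one)
  then show ?thesis using assms(2,3) unfolding is_submodule_def by (metis diff_conv_add_uminus)
qed

lemma span_over_subset: "is_submodule phi N \<Longrightarrow> F \<subseteq> N \<Longrightarrow> span_over phi F \<subseteq> N"
  unfolding span_over_def
  by (auto intro!: is_submodule_sum) (auto simp: is_submodule_def)

lemma is_submodule_span_over:
  assumes hom: "is_ring_hom phi" shows "is_submodule phi (span_over phi F)"
  unfolding is_submodule_def
proof (intro conjI ballI allI)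
  have "0 = (\<Sum>z\<in>F. phi 0 * z)" by (simp add: ring_hom_zero[OF hom])
  then show "0 \<in> span_over phi F" by (rule span_overI)
next
  fix x y assume "x \<in> span_over phi F" "y \<in> span_over phi F"
  then obtain c d where "x = (\<Sum>z\<in>F. phi (c z) * z)" "y = (\<Sum>z\<in>F. phi (d z) * z)"
    unfolding span_over_def by auto
  then have "x + y = (\<Sum>z\<in>F. phi (c z + d z) * z)"
    by (simp add: ring_hom_add[OF hom] sum.distrib distrib_right)
  then show "x + y \<in> span_over phi F" by (rule span_overI)
next
  fix a x assume "x \<in> span_over phi F"
  then obtain c where "x = (\<Sum>z\<in>F. phi (c z) * z)" unfolding span_over_def by auto
  then have "phi a * x = (\<Sum>z\<in>F. phi (a * c z) * z)"
    by (simp add: ring_hom_mult[OF hom] sum_distrib_left mult.assoc)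
  then show "phi a * x \<in> span_over phi F" by (rule span_overI)
qed

lemma span_over_mono:
  assumes hom: "is_ring_hom phi" and "finite G" "F \<subseteq> G"
  shows "span_over phi F \<subseteq> span_over phi G"
proof
  fix x assume "x \<in> span_over phi F"
  then obtain c where x: "x = (\<Sum>z\<in>F. phi (c z) * z)" unfolding span_over_def by auto
  have "(\<Sum>z\<in>G. phi (if z \<in> F then c z else 0) * z) = (\<Sum>z\<in>F. phi (c z) * z)"
    by (rule sum.mono_neutral_cong_right[OF assms(2,3)]) (auto simp: ring_hom_zero[OF hom])
  then show "x \<in> span_over phi G" unfolding x by (rule span_overI[OF sym])
qed

lemma span_over_superset:
  assumes hom: "is_ring_hom phi" and "finite F" shows "F \<subseteq> span_over phi F"
proof
  fix x assume "x \<in> F"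
  have "(\<Sum>z\<in>F. phi (if z = x then 1 else 0) * z) = (\<Sum>z\<in>F. if z = x then z else 0)"
    by (rule sum.cong) (auto simp: ring_hom_zero[OF hom] ring_hom_one[OF hom])
  also have "\<dots> = x" using \<open>finite F\<close> \<open>x \<in> F\<close> by simp
  finally show "x \<in> span_over phi F" by (rule span_overI[OF sym])
qed

lemma span_over_insertE:
  assumes "finite T" "s \<notin> T" "x \<in> span_over phi (insert s T)"
  obtains a t where "t \<in> span_over phi T" "x = phi a * s + t"
proof -
  obtain c where "x = (\<Sum>z\<in>insert s T. phi (c z) * z)" using assms unfolding span_over_def by auto
  then have "x = phi (c s) * s + (\<Sum>z\<in>T. phi (c z) * z)" using assms by simp
  then show thesis using that span_overI by blast
qed

lemma is_submodule_id_iff: "is_submodule id I \<longleftrightarrow> is_ideal I"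
  unfolding is_submodule_def is_ideal_def by simp

lemma noetherian_ring_iff_noetherian_module_id:
  "noetherian_ring TYPE('a::comm_ring_1) \<longleftrightarrow> noetherian_module (id :: 'a \<Rightarrow> 'a)"
  unfolding noetherian_ring_def noetherian_module_def is_submodule_id_iff span_over_def by simp

section \<open>Finitely generated modules over a Noetherian ring are Noetherian\<close>

definition coeff_ideal :: "('k::comm_ring_1 \<Rightarrow> 'r::comm_ring_1) \<Rightarrow> 'r set \<Rightarrow> 'r \<Rightarrow> 'r set \<Rightarrow> 'k set"
  where "coeff_ideal phi T s N = {a. \<exists>t\<in>span_over phi T. phi a * s + t \<in> N}"

lemma is_ideal_coeff_ideal:
  assumes hom: "is_ring_hom phi" and N: "is_submodule phi N"
  shows "is_ideal (coeff_ideal phi T s N)"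
  unfolding is_ideal_def
proof (intro conjI ballI allI)
  have sT: "is_submodule phi (span_over phi T)" by (rule is_submodule_span_over[OF hom])
  have "phi 0 * s + 0 \<in> N" using N by (simp add: ring_hom_zero[OF hom] is_submodule_def)
  then show "0 \<in> coeff_ideal phi T s N"
    using sT unfolding coeff_ideal_def is_submodule_def by blast
next
  fix x y assume "x \<in> coeff_ideal phi T s N" "y \<in> coeff_ideal phi T s N"
  then obtain t u where tu: "t \<in> span_over phi T" "u \<in> span_over phi T"
    "phi x * s + t \<in> N" "phi y * s + u \<in> N" unfolding coeff_ideal_def by blast
  have "phi (x + y) * s + (t + u) = (phi x * s + t) + (phi y * s + u)"
    by (simp add: ring_hom_add[OF hom] algebra_simps)
  also have "\<dots> \<in> N" using tu N unfolding is_submodule_def by blast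
  finally show "x + y \<in> coeff_ideal phi T s N"
    using tu is_submodule_span_over[OF hom] unfolding coeff_ideal_def is_submodule_def by blast
next
  fix r x assume "x \<in> coeff_ideal phi T s N"
  then obtain t where t: "t \<in> span_over phi T" "phi x * s + t \<in> N"
    unfolding coeff_ideal_def by blast
  have "phi (r * x) * s + phi r * t = phi r * (phi x * s + t)"
    by (simp add: ring_hom_mult[OF hom] algebra_simps)
  also have "\<dots> \<in> N" using t N unfolding is_submodule_def by blast
  finally show "r * x \<in> coeff_ideal phi T s N"
    using t is_submodule_span_over[OF hom] unfolding coeff_ideal_def is_submodule_def by blast
qed

text \<open>Reduction modulo \<open>N \<inter> span T\<close>: the \<open>s\<close>-coefficient of \<open>x \<in> N\<close> is a combination of
  generators \<open>g\<close> of the coefficient ideal, and the same combination of chosen elements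
  \<open>g s + lift g \<in> N\<close> agrees with \<open>x\<close> up to an element of \<open>span T\<close>.\<close>

lemma coeff_ideal_reduce:
  assumes hom: "is_ring_hom phi" and T: "finite T" "s \<notin> T"
    and N: "is_submodule phi N" "N \<subseteq> span_over phi (insert s T)"
    and G: "finite G" "coeff_ideal phi T s N = {\<Sum>x\<in>G. c x * x | c. True}"
    and lift: "\<And>g. g \<in> G \<Longrightarrow> lift g \<in> span_over phi T \<and> phi g * s + lift g \<in> N"
    and x: "x \<in> N"
  obtains y where "y \<in> span_over phi ((\<lambda>g. phi g * s + lift g) ` G)" "x - y \<in> N \<inter> span_over phi T"
proof -
  let ?L = "(\<lambda>g. phi g * s + lift g) ` G"
  have sT: "is_submodule phi (span_over phi T)" by (rule is_submodule_span_over[OF hom])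
  obtain a t where at: "t \<in> span_over phi T" "x = phi a * s + t"
    using span_over_insertE[OF T] N(2) x by blast
  then have "a \<in> coeff_ideal phi T s N" unfolding coeff_ideal_def using x by auto
  then obtain c where c: "a = (\<Sum>g\<in>G. c g * g)" using G(2) by auto
  define y where "y = (\<Sum>g\<in>G. phi (c g) * (phi g * s + lift g))"
  have "phi g * s + lift g \<in> span_over phi ?L" if "g \<in> G" for g
    using span_over_superset[OF hom finite_imageI[OF G(1)]] imageI[OF that] by (rule subsetD)
  then have yL: "y \<in> span_over phi ?L"
    unfolding y_def using is_submodule_span_over[OF hom, of ?L]
    by (intro is_submodule_sum[OF is_submodule_span_over[OF hom]]) (simp add: is_submodule_def)
  have "(\<Sum>g\<in>G. phi (c g) * lift g) \<in> span_over phi T"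
    using lift sT by (intro is_submodule_sum[OF sT]) (simp add: is_submodule_def)
  moreover have "x - y = t - (\<Sum>g\<in>G. phi (c g) * lift g)"
    unfolding at y_def c
    by (simp add: ring_hom_sum[OF hom] ring_hom_mult[OF hom] distrib_left sum.distrib
        sum_distrib_right mult.assoc)
  ultimately have "x - y \<in> span_over phi T" using is_submodule_diff[OF hom sT at(1)] by simp
  moreover have "?L \<subseteq> N" using lift by blast
  then have "y \<in> N" using span_over_subset[OF N(1)] yL by blast
  then have "x - y \<in> N" by (rule is_submodule_diff[OF hom N(1) x])
  ultimately have "x - y \<in> N \<inter> span_over phi T" by blast
  with yL show thesis by (rule that)
qed

lemma finitely_spanned_insert:
  assumes hom: "is_ring_hom phi" and noeth: "noetherian_ring TYPE('k::comm_ring_1)"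
    and T: "finite T" "s \<notin> T"
    and IH: "\<And>N. is_submodule phi N \<Longrightarrow> N \<subseteq> span_over phi T \<Longrightarrow>
               \<exists>F. finite F \<and> F \<subseteq> N \<and> N = span_over phi F"
    and N: "is_submodule (phi :: 'k \<Rightarrow> 'r::comm_ring_1) N" "N \<subseteq> span_over phi (insert s T)"
  shows "\<exists>F. finite F \<and> F \<subseteq> N \<and> N = span_over phi F"
proof -
  obtain G where G: "finite G" "G \<subseteq> coeff_ideal phi T s N"
      "coeff_ideal phi T s N = {\<Sum>x\<in>G. c x * x | c. True}"
    using noeth[unfolded noetherian_ring_def, rule_format, OF is_ideal_coeff_ideal[OF hom N(1), of T s]]
    by blast
  have "\<forall>g\<in>G. \<exists>t. t \<in> span_over phi T \<and> phi g * s + t \<in> N"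
    using G(2) unfolding coeff_ideal_def by blast
  then obtain lift where lift: "\<And>g. g \<in> G \<Longrightarrow> lift g \<in> span_over phi T \<and> phi g * s + lift g \<in> N"
    by metis
  let ?L = "(\<lambda>g. phi g * s + lift g) ` G"
  have "is_submodule phi (N \<inter> span_over phi T)"
    using N(1) is_submodule_span_over[OF hom] by (rule is_submodule_Int)
  from IH[OF this Int_lower2] obtain F' where
    F': "finite F'" "F' \<subseteq> N \<inter> span_over phi T" "N \<inter> span_over phi T = span_over phi F'"
    by blast
  have F: "finite (F' \<union> ?L)" "F' \<union> ?L \<subseteq> N" using F'(1,2) G(1) lift by auto
  have "N \<subseteq> span_over phi (F' \<union> ?L)"
  proof
    fix x assume "x \<in> N"
    then obtain y where y: "y \<in> span_over phi ?L" "x - y \<in> N \<inter> span_over phi T"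
      using coeff_ideal_reduce[OF hom T N G(1,3) lift] by blast
    then have "y \<in> span_over phi (F' \<union> ?L)" "x - y \<in> span_over phi (F' \<union> ?L)"
      using span_over_mono[OF hom F(1) Un_upper2] span_over_mono[OF hom F(1) Un_upper1]
      unfolding F'(3) by blast+
    then have "(x - y) + y \<in> span_over phi (F' \<union> ?L)"
      using is_submodule_span_over[OF hom] unfolding is_submodule_def by blast
    then show "x \<in> span_over phi (F' \<union> ?L)" by simp
  qed
  then show ?thesis using F span_over_subset[OF N(1) F(2)] by blast
qed

lemma noetherian_module_if_finite_module:
  assumes noeth: "noetherian_ring TYPE('k::comm_ring_1)" and hom: "is_ring_hom phi"
    and fm: "finite_module_over (phi :: 'k \<Rightarrow> 'r::comm_ring_1)"
  shows "noetherian_module phi"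
proof -
  obtain S where S: "finite S" "\<forall>r. \<exists>c. r = (\<Sum>s\<in>S. phi (c s) * s)"
    using fm unfolding finite_module_over_def by blast
  have "is_submodule phi N \<Longrightarrow> N \<subseteq> span_over phi S \<Longrightarrow>
      \<exists>F. finite F \<and> F \<subseteq> N \<and> N = span_over phi F" for N
    using S(1)
  proof (induction S arbitrary: N rule: finite_induct)
    case empty
    then have "N = span_over phi {}" unfolding span_over_def is_submodule_def by auto
    then show ?case by blast
  next
    case (insert s T)
    show ?case
      by (rule finitely_spanned_insert[OF hom noeth insert.hyps(1,2) insert.IH insert.prems])
  qed
  moreover have "N \<subseteq> span_over phi S" for N using S(2) by (auto intro: span_overI)
  ultimately show ?thesis unfolding noetherian_module_def by blast
qed

lemma noetherian_module_id:
  assumes hom: "is_ring_hom phi" and noeth: "noetherian_module (phi :: 'k::comm_ring_1 \<Rightarrow> 'r::comm_ring_1)"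
  shows "noetherian_module (id :: 'r \<Rightarrow> 'r)"
  unfolding noetherian_module_def
proof (intro allI impI)
  fix I :: "'r set" assume I: "is_submodule id I"
  then have "is_submodule phi I" unfolding is_submodule_def by simp
  then obtain F where F: "finite F" "F \<subseteq> I" "I = span_over phi F"
    using noeth unfolding noetherian_module_def by blast
  have "span_over phi F \<subseteq> span_over id F"
  proof
    fix x assume "x \<in> span_over phi F"
    then obtain c where "x = (\<Sum>z\<in>F. phi (c z) * z)" unfolding span_over_def by blast
    then show "x \<in> span_over id F" by (intro span_overI[where c = "phi \<circ> c"]) simp
  qed
  then have "I = span_over id F" using F(3) span_over_subset[OF I F(2)] by blast
  then show "\<exists>F. finite F \<and> F \<subseteq> I \<and> I = span_over id F" using F(1,2) by blast
qed

lemma is_submodule_Union_chain: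
  assumes ch: "chain\<^sub>\<subseteq> C" and "C \<noteq> {}" and sub: "\<And>X. X \<in> C \<Longrightarrow> is_submodule phi X"
  shows "is_submodule phi (\<Union>C)"
  unfolding is_submodule_def
proof (intro conjI ballI allI)
  obtain X where "X \<in> C" using \<open>C \<noteq> {}\<close> by blast
  then show "0 \<in> \<Union>C" using sub[of X] unfolding is_submodule_def by blast
next
  fix x y assume "x \<in> \<Union>C" "y \<in> \<Union>C"
  then obtain X Y where XY: "X \<in> C" "Y \<in> C" "x \<in> X" "y \<in> Y" by blast
  have "X \<subseteq> Y \<or> Y \<subseteq> X" using ch XY(1,2) unfolding chain_subset_def by blast
  then obtain Z where "Z \<in> C" "x \<in> Z" "y \<in> Z" using XY by blast
  then show "x + y \<in> \<Union>C" using sub[of Z] unfolding is_submodule_def by blast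
next
  fix c x assume "x \<in> \<Union>C"
  then obtain X where "X \<in> C" "x \<in> X" by blast
  then show "phi c * x \<in> \<Union>C" using sub[of X] unfolding is_submodule_def by blast
qed

lemma noetherian_module_maximal:
  assumes noeth: "noetherian_module phi"
    and ne: "A \<noteq> {}" and sub: "\<And>X. X \<in> A \<Longrightarrow> is_submodule phi X"
  shows "\<exists>M\<in>A. \<forall>X\<in>A. M \<subseteq> X \<longrightarrow> X = M"
proof (rule Zorn_Lemma2, rule ballI)
  fix C assume "C \<in> chains A"
  then have CA: "C \<subseteq> A" and ch: "chain\<^sub>\<subseteq> C" unfolding chains_def by auto
  show "\<exists>U\<in>A. \<forall>X\<in>C. X \<subseteq> U"
  proof (cases "C = {}")
    case True then show ?thesis using ne by auto
  next
    case False
    have "is_submodule phi (\<Union>C)" using CA sub by (intro is_submodule_Union_chain[OF ch False]) blast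
    then obtain F where F: "finite F" "F \<subseteq> \<Union>C" "\<Union>C = span_over phi F"
      using noeth unfolding noetherian_module_def by iprover
    \<comment> \<open>the finitely many generators already lie in one member of the chain\<close>
    obtain U where U: "U \<in> C" "F \<subseteq> U"
      using F(1,2) False ch[unfolded chain_subset_alt_def] by (rule finite_subset_Union_chain)
    have "U \<in> A" using U(1) CA by blast
    then have "\<Union>C \<subseteq> U" unfolding F(3) using span_over_subset[OF sub U(2)] by blast
    then show ?thesis using \<open>U \<in> A\<close> by blast
  qed
qed

section \<open>Integrality\<close>

definition power_span :: "('k::comm_ring_1 \<Rightarrow> 'r::comm_ring_1) \<Rightarrow> 'r \<Rightarrow> nat \<Rightarrow> 'r set" where
  "power_span phi s n = {\<Sum>i<n. phi (c i) * s ^ i | c. True}"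

lemma power_spanI: "x = (\<Sum>i<n. phi (c i) * s ^ i) \<Longrightarrow> x \<in> power_span phi s n"
  unfolding power_span_def by blast

lemma is_submodule_power_span:
  assumes hom: "is_ring_hom phi" shows "is_submodule phi (power_span phi s n)"
  unfolding is_submodule_def
proof (intro conjI ballI allI)
  have "0 = (\<Sum>i<n. phi 0 * s ^ i)" by (simp add: ring_hom_zero[OF hom])
  then show "0 \<in> power_span phi s n" by (rule power_spanI)
next
  fix x y assume "x \<in> power_span phi s n" "y \<in> power_span phi s n"
  then obtain c d where "x = (\<Sum>i<n. phi (c i) * s ^ i)" "y = (\<Sum>i<n. phi (d i) * s ^ i)"
    unfolding power_span_def by auto
  then have "x + y = (\<Sum>i<n. phi (c i + d i) * s ^ i)"
    by (simp add: ring_hom_add[OF hom] sum.distrib distrib_right)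
  then show "x + y \<in> power_span phi s n" by (rule power_spanI)
next
  fix a x assume "x \<in> power_span phi s n"
  then obtain c where "x = (\<Sum>i<n. phi (c i) * s ^ i)" unfolding power_span_def by auto
  then have "phi a * x = (\<Sum>i<n. phi (a * c i) * s ^ i)"
    by (simp add: ring_hom_mult[OF hom] sum_distrib_left mult.assoc)
  then show "phi a * x \<in> power_span phi s n" by (rule power_spanI)
qed

lemma integral_element:
  assumes hom: "is_ring_hom phi" and noeth: "noetherian_module phi"
  shows "\<exists>n c. s ^ n = (\<Sum>i<n. phi (c i) * s ^ i)"
proof -
  obtain m where m: "\<forall>X\<in>range (power_span phi s). power_span phi s m \<subseteq> X \<longrightarrow> X = power_span phi s m"
    using noetherian_module_maximal[OF noeth, of "range (power_span phi s)"]
      is_submodule_power_span[OF hom] by blast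
  have "power_span phi s m \<subseteq> power_span phi s (Suc m)"
  proof
    fix x assume "x \<in> power_span phi s m"
    then obtain c where x: "x = (\<Sum>i<m. phi (c i) * s ^ i)" unfolding power_span_def by auto
    have "(\<Sum>i<Suc m. phi (if i < m then c i else 0) * s ^ i) = x"
      unfolding x by (simp add: ring_hom_zero[OF hom])
    then show "x \<in> power_span phi s (Suc m)" by (rule power_spanI[OF sym])
  qed
  then have eq: "power_span phi s (Suc m) = power_span phi s m" using m by blast
  have "(\<Sum>i<Suc m. phi (if i = m then 1 else 0) * s ^ i) = s ^ m"
    by (simp add: ring_hom_zero[OF hom] ring_hom_one[OF hom])
  then have "s ^ m \<in> power_span phi s (Suc m)" by (rule power_spanI[OF sym])
  then have "s ^ m \<in> power_span phi s m" unfolding eq .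
  then show ?thesis unfolding power_span_def by blast
qed

section \<open>Radical ideals are finite intersections of primes\<close>

lemma ideal_zero: "is_ideal I \<Longrightarrow> 0 \<in> I"
  unfolding is_ideal_def by blast

lemma ideal_add: "is_ideal I \<Longrightarrow> x \<in> I \<Longrightarrow> y \<in> I \<Longrightarrow> x + y \<in> I"
  unfolding is_ideal_def by blast

lemma ideal_mult_left: "is_ideal I \<Longrightarrow> x \<in> I \<Longrightarrow> r * x \<in> I"
  unfolding is_ideal_def by blast

lemma ideal_mult_right: "is_ideal I \<Longrightarrow> x \<in> I \<Longrightarrow> x * r \<in> I"
  using ideal_mult_left[of I x r] by (simp add: mult.commute)

lemma ideal_diff: "is_ideal I \<Longrightarrow> x \<in> I \<Longrightarrow> y \<in> I \<Longrightarrow> x - y \<in> I"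
  using ideal_add[of I x "- y"] ideal_mult_left[of I y "- 1"] by simp

lemma ideal_sum: "is_ideal I \<Longrightarrow> (\<And>a. a \<in> A \<Longrightarrow> g a \<in> I) \<Longrightarrow> sum g A \<in> I"
  by (induction A rule: infinite_finite_induct) (auto simp: ideal_zero ideal_add)

lemma ideal_power_mono: "is_ideal I \<Longrightarrow> x ^ n \<in> I \<Longrightarrow> n \<le> m \<Longrightarrow> x ^ m \<in> I"
  using ideal_mult_right[of I "x ^ n" "x ^ (m - n)"] by (simp add: power_add[symmetric])

definition radical_of :: "'r::comm_ring_1 set \<Rightarrow> 'r set" where
  "radical_of I = {x. \<exists>n. x ^ n \<in> I}"

definition is_radical_ideal :: "'r::comm_ring_1 set \<Rightarrow> bool" where
  "is_radical_ideal I \<longleftrightarrow> is_ideal I \<and> (\<forall>x n. x ^ n \<in> I \<longrightarrow> x \<in> I)"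

definition is_prime_ideal :: "'r::comm_ring_1 set \<Rightarrow> bool" where
  "is_prime_ideal P \<longleftrightarrow> is_ideal P \<and> 1 \<notin> P \<and> (\<forall>a b. a * b \<in> P \<longrightarrow> a \<in> P \<or> b \<in> P)"

definition ideal_adjoin :: "'r::comm_ring_1 set \<Rightarrow> 'r \<Rightarrow> 'r set" where
  "ideal_adjoin I a = {i + r * a | i r. i \<in> I}"

lemma subset_radical_of: "I \<subseteq> radical_of I"
  unfolding radical_of_def by (auto intro: exI[of _ 1])

lemma is_radical_ideal_radical_of:
  assumes I: "is_ideal I" shows "is_radical_ideal (radical_of I)"
  unfolding is_radical_ideal_def is_ideal_def
proof (intro conjI ballI allI impI)
  show "0 \<in> radical_of I" using subset_radical_of ideal_zero[OF I] by blast
next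
  fix x y assume "x \<in> radical_of I" "y \<in> radical_of I"
  then obtain n m where nm: "x ^ n \<in> I" "y ^ m \<in> I" unfolding radical_of_def by blast
  have "(x + y) ^ (n + m) = (\<Sum>k\<le>n + m. of_nat ((n + m) choose k) * x ^ k * y ^ (n + m - k))"
    by (rule binomial_ring)
  also have "\<dots> \<in> I"
  proof (rule ideal_sum[OF I])
    fix k assume "k \<in> {..n + m}"
    \<comment> \<open>each binomial term contains \<open>x ^ n\<close> or \<open>y ^ m\<close>\<close>
    show "of_nat ((n + m) choose k) * x ^ k * y ^ (n + m - k) \<in> I"
    proof (cases "n \<le> k")
      case True
      then show ?thesis using ideal_power_mono[OF I nm(1)] I by (simp add: ideal_mult_left ideal_mult_right)
    next
      case False
      then have "y ^ (n + m - k) \<in> I" using ideal_power_mono[OF I nm(2)] by simp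
      then show ?thesis using I by (simp add: ideal_mult_left)
    qed
  qed
  finally show "x + y \<in> radical_of I" unfolding radical_of_def by blast
next
  fix r x assume "x \<in> radical_of I"
  then obtain n where "x ^ n \<in> I" unfolding radical_of_def by blast
  then have "(r * x) ^ n \<in> I" using ideal_mult_left[OF I] by (simp add: power_mult_distrib)
  then show "r * x \<in> radical_of I" unfolding radical_of_def by blast
next
  fix x n assume "x ^ n \<in> radical_of I"
  then obtain m where "(x ^ n) ^ m \<in> I" unfolding radical_of_def by blast
  then show "x \<in> radical_of I" unfolding radical_of_def by (auto simp: power_mult[symmetric])
qed

lemma is_ideal_ideal_adjoin:
  assumes I: "is_ideal I" shows "is_ideal (ideal_adjoin I a)"
  unfolding is_ideal_def
proof (intro conjI ballI allI)
  have "0 = 0 + 0 * a" by simp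
  then show "0 \<in> ideal_adjoin I a" unfolding ideal_adjoin_def using ideal_zero[OF I] by blast
next
  fix x y assume "x \<in> ideal_adjoin I a" "y \<in> ideal_adjoin I a"
  then obtain i r j t where ij: "i \<in> I" "j \<in> I" and "x = i + r * a" "y = j + t * a"
    unfolding ideal_adjoin_def by blast
  then have "x + y = (i + j) + (r + t) * a" by (simp add: algebra_simps)
  then show "x + y \<in> ideal_adjoin I a" unfolding ideal_adjoin_def using ideal_add[OF I ij] by blast
next
  fix q x assume "x \<in> ideal_adjoin I a"
  then obtain i r where i: "i \<in> I" and "x = i + r * a" unfolding ideal_adjoin_def by blast
  then have "q * x = q * i + (q * r) * a" by (simp add: algebra_simps)
  then show "q * x \<in> ideal_adjoin I a" unfolding ideal_adjoin_def using ideal_mult_left[OF I i] by blast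
qed

lemma subset_ideal_adjoin: "is_ideal I \<Longrightarrow> I \<subseteq> ideal_adjoin I a"
  unfolding ideal_adjoin_def by (force intro: exI[of _ 0])

lemma mem_ideal_adjoin:
  assumes "is_ideal I" shows "a \<in> ideal_adjoin I a"
proof -
  have "a = 0 + 1 * a" by simp
  then show ?thesis unfolding ideal_adjoin_def using ideal_zero[OF assms] by blast
qed

lemma radical_ideal_eq_Int_adjoin:
  assumes M: "is_radical_ideal M" and ab: "a * b \<in> M"
  shows "M = radical_of (ideal_adjoin M a) \<inter> radical_of (ideal_adjoin M b)"
proof
  have "is_ideal M" using M unfolding is_radical_ideal_def by blast
  then show "M \<subseteq> radical_of (ideal_adjoin M a) \<inter> radical_of (ideal_adjoin M b)"
    using subset_ideal_adjoin subset_radical_of by blast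
next
  show "radical_of (ideal_adjoin M a) \<inter> radical_of (ideal_adjoin M b) \<subseteq> M"
  proof
    fix x assume "x \<in> radical_of (ideal_adjoin M a) \<inter> radical_of (ideal_adjoin M b)"
    then obtain n m i r j t where ij: "i \<in> M" "j \<in> M" and "x ^ n = i + r * a" "x ^ m = j + t * b"
      unfolding radical_of_def ideal_adjoin_def by blast
    then have "x ^ (n + m) = i * (j + t * b) + r * (a * j) + (r * t) * (a * b)"
      by (simp add: power_add algebra_simps)
    also have "\<dots> \<in> M"
      using ij ab M by (simp add: is_radical_ideal_def ideal_add ideal_mult_left ideal_mult_right)
    finally show "x \<in> M" using M unfolding is_radical_ideal_def by blast
  qed
qed

lemma radical_ideal_split:
  assumes M: "is_radical_ideal M" and "1 \<notin> M" and "\<not> is_prime_ideal M"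
  obtains J1 J2 where "is_radical_ideal J1" "is_radical_ideal J2" "M \<subset> J1" "M \<subset> J2"
    "M = J1 \<inter> J2"
proof -
  have Mi: "is_ideal M" using M unfolding is_radical_ideal_def by blast
  then obtain a b where ab: "a * b \<in> M" "a \<notin> M" "b \<notin> M"
    using assms(2,3) unfolding is_prime_ideal_def by blast
  let ?J = "\<lambda>x. radical_of (ideal_adjoin M x)"
  have rad: "is_radical_ideal (?J x)" for x
    by (rule is_radical_ideal_radical_of[OF is_ideal_ideal_adjoin[OF Mi]])
  have larger: "M \<subset> ?J x" if "x \<notin> M" for x
  proof -
    have "M \<subseteq> ?J x" using subset_ideal_adjoin[OF Mi] subset_radical_of by blast
    moreover have "x \<in> ?J x" using mem_ideal_adjoin[OF Mi] subset_radical_of by blast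
    ultimately show ?thesis using that by blast
  qed
  show thesis
    by (rule that[OF rad rad larger[OF ab(2)] larger[OF ab(3)] radical_ideal_eq_Int_adjoin[OF M ab(1)]])
qed

lemma radical_ideal_Inter_prime_ideals:
  assumes noeth: "noetherian_ring TYPE('r::comm_ring_1)" and I: "is_radical_ideal (I :: 'r set)"
  shows "\<exists>Ps. finite Ps \<and> (\<forall>P\<in>Ps. is_prime_ideal P) \<and> I = \<Inter>Ps"
proof (rule ccontr)
  define good where
    "good J \<longleftrightarrow> (\<exists>Ps. finite Ps \<and> (\<forall>P\<in>Ps. is_prime_ideal P) \<and> (J :: 'r set) = \<Inter>Ps)" for J
  define bad where "bad = {J. is_radical_ideal J \<and> \<not> good J}"
  assume "\<not> ?thesis"
  then have "I \<in> bad" using I unfolding bad_def good_def by blast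
  moreover have "is_submodule id X" if "X \<in> bad" for X
    using that unfolding bad_def is_radical_ideal_def is_submodule_id_iff by blast
  ultimately obtain M where "M \<in> bad" and max: "\<And>X. X \<in> bad \<Longrightarrow> M \<subseteq> X \<Longrightarrow> X = M"
    using noetherian_module_maximal[of id bad] noeth
    unfolding noetherian_ring_iff_noetherian_module_id by blast
  then have Mr: "is_radical_ideal M" and Mg: "\<not> good M" unfolding bad_def by auto
  have "1 \<notin> M"
  proof
    assume "1 \<in> M"
    then have "M = \<Inter>{}" using ideal_mult_left[of M 1] Mr by (auto simp: is_radical_ideal_def)
    then show False using Mg unfolding good_def by blast
  qed
  moreover have "\<not> is_prime_ideal M"
  proof
    assume "is_prime_ideal M"
    then have "good M" unfolding good_def by (intro exI[of _ "{M}"]) auto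
    then show False using Mg by blast
  qed
  ultimately obtain J1 J2 where J: "is_radical_ideal J1" "is_radical_ideal J2"
    "M \<subset> J1" "M \<subset> J2" and M_eq: "M = J1 \<inter> J2"
    using radical_ideal_split[OF Mr] by blast
  then have "good J1" "good J2" using max unfolding bad_def by blast+
  then obtain Pa Pb where "finite Pa" "\<forall>P\<in>Pa. is_prime_ideal P" "J1 = \<Inter>Pa"
      and "finite Pb" "\<forall>P\<in>Pb. is_prime_ideal P" "J2 = \<Inter>Pb"
    unfolding good_def by blast
  then have "good M" unfolding good_def M_eq by (intro exI[of _ "Pa \<union> Pb"]) auto
  then show False using Mg by blast
qed

section \<open>Roots of monic polynomials\<close>

definition coset :: "'r::comm_ring_1 set \<Rightarrow> 'r \<Rightarrow> 'r set" where
  "coset I y = {y + x | x. x \<in> I}"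

lemma coset_eq:
  assumes I: "is_ideal I" and "y - y0 \<in> I" shows "coset I y = coset I y0"
proof -
  have "y + x = y0 + ((y - y0) + x)" "y0 + x = y + (x - (y - y0))" for x by simp_all
  then show ?thesis unfolding coset_def using ideal_add[OF I] ideal_diff[OF I] assms(2) by metis
qed

lemma coset_Int: "coset (I \<inter> J) y = coset I y \<inter> coset J y"
  unfolding coset_def by auto

lemma coset_UNIV: "coset UNIV y = UNIV"
  unfolding coset_def by (auto intro: exI[of _ "x - y" for x])

lemma coset_zero: "coset {0} y = {y}"
  unfolding coset_def by auto

lemma finite_cosets_roots_mod_prime:
  assumes P: "is_prime_ideal (P :: 'r::comm_ring_1 set)"
  shows "lead_coeff p \<notin> P \<Longrightarrow> finite (coset P ` {y. poly p y \<in> P})"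
proof (induction "degree p" arbitrary: p)
  case 0
  then have "poly p y = lead_coeff p" for y
    using degree_0_id[of p] by (metis poly_pCons poly_0 mult_zero_right add_0_right)
  then show ?case using 0 by simp
next
  case (Suc d p)
  have Pi: "is_ideal P" using P unfolding is_prime_ideal_def by blast
  show ?case
  proof (cases "\<exists>y0. poly p y0 \<in> P")
    case False then show ?thesis by simp
  next
    case True
    then obtain y0 where y0: "poly p y0 \<in> P" by blast
    \<comment> \<open>divide off the root: \<open>p = (X - y0) q + p(y0)\<close>, and \<open>q\<close> has the same leading coefficient\<close>
    define q where "q = synthetic_div p y0"
    have pq: "poly p y = (y - y0) * poly q y + poly p y0" for y
      using arg_cong[OF synthetic_div_correct'[of y0 p], of "\<lambda>r. poly r y"]
      unfolding q_def by (simp add: algebra_simps)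
    have dq: "degree q = d" unfolding q_def degree_synthetic_div using Suc(2) by simp
    have "lead_coeff q = lead_coeff p"
      using arg_cong[OF synthetic_div_correct[of p y0], of "\<lambda>r. coeff r (Suc d)"] dq Suc(2)[symmetric]
      unfolding q_def[symmetric] by (simp add: coeff_eq_0)
    then have fq: "finite (coset P ` {y. poly q y \<in> P})" using Suc dq by simp
    have "{y. poly p y \<in> P} \<subseteq> {y. y - y0 \<in> P} \<union> {y. poly q y \<in> P}"
    proof
      fix y assume "y \<in> {y. poly p y \<in> P}"
      then have "(y - y0) * poly q y \<in> P" using ideal_diff[OF Pi _ y0] pq[of y] by force
      then show "y \<in> {y. y - y0 \<in> P} \<union> {y. poly q y \<in> P}" using P unfolding is_prime_ideal_def by blast
    qed
    moreover have "coset P ` {y. y - y0 \<in> P} \<subseteq> {coset P y0}" using coset_eq[OF Pi] by blast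
    ultimately have "coset P ` {y. poly p y \<in> P} \<subseteq> {coset P y0} \<union> coset P ` {y. poly q y \<in> P}"
      by blast
    then show ?thesis using fq by (simp add: finite_subset)
  qed
qed

lemma finite_cosets_Inter:
  assumes "finite Ps" shows "(\<And>P. P \<in> Ps \<Longrightarrow> finite (coset P ` Z)) \<Longrightarrow> finite (coset (\<Inter>Ps) ` Z)"
  using assms
proof (induction Ps rule: finite_induct)
  case empty
  have "coset (\<Inter>{}) ` Z \<subseteq> {UNIV}" by (auto simp: coset_UNIV)
  then show ?case by (rule finite_subset) simp
next
  case (insert P Ps)
  have "coset (\<Inter>(insert P Ps)) ` Z \<subseteq> (\<lambda>(A, B). A \<inter> B) ` (coset P ` Z \<times> coset (\<Inter>Ps) ` Z)"
    by (auto simp: coset_Int)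
  moreover have "finite (coset P ` Z \<times> coset (\<Inter>Ps) ` Z)" using insert by auto
  ultimately show ?case using finite_subset by blast
qed

lemma finite_roots_monic:
  assumes noeth: "noetherian_ring TYPE('r::comm_ring_1)" and red: "reduced_ring TYPE('r)"
    and monic: "lead_coeff (p :: 'r poly) = 1"
  shows "finite {y. poly p y = 0}"
proof -
  define Z where "Z = {y. poly p y = 0}"
  have "is_radical_ideal ({0} :: 'r set)"
    using red unfolding is_radical_ideal_def is_ideal_def reduced_ring_def by simp
  then obtain Ps where Ps: "finite Ps" "\<forall>P\<in>Ps. is_prime_ideal P" "{0 :: 'r} = \<Inter>Ps"
    using radical_ideal_Inter_prime_ideals[OF noeth] by metis
  have "finite (coset P ` Z)" if "P \<in> Ps" for P
  proof -
    have P: "is_prime_ideal P" using Ps(2) that by blast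
    then have "lead_coeff p \<notin> P" using monic unfolding is_prime_ideal_def by simp
    then have "finite (coset P ` {y. poly p y \<in> P})" by (rule finite_cosets_roots_mod_prime[OF P])
    moreover have "Z \<subseteq> {y. poly p y \<in> P}"
      using P unfolding Z_def is_prime_ideal_def by (auto simp: ideal_zero)
    ultimately show ?thesis by (rule finite_subset[OF image_mono, rotated])
  qed
  then have "finite (coset (\<Inter>Ps) ` Z)" using finite_cosets_Inter[OF Ps(1)] by blast
  then have "finite ((\<lambda>y. {y}) ` Z)" unfolding Ps(3)[symmetric] coset_zero .
  then show ?thesis unfolding Z_def[symmetric] by (rule finite_imageD) (simp add: inj_on_def)
qed

lemma finite_integral_roots:
  assumes "noetherian_ring TYPE('r::comm_ring_1)" and "reduced_ring TYPE('r)"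
  shows "finite {y :: 'r. y ^ n = (\<Sum>i<n. a i * y ^ i)}"
proof -
  define p :: "'r poly" where "p = monom 1 n - (\<Sum>i<n. monom (a i) i)"
  have cp: "coeff p j = (if n = j then 1 else 0) - (\<Sum>i<n. if i = j then a i else 0)" for j
    unfolding p_def by (simp add: coeff_sum)
  have "degree p \<le> n" by (rule degree_le) (simp add: cp)
  moreover have "coeff p n = 1" by (simp add: cp)
  ultimately have monic: "lead_coeff p = 1" using le_degree[of p n] by fastforce
  have "poly p y = y ^ n - (\<Sum>i<n. a i * y ^ i)" for y
    unfolding p_def by (simp add: poly_sum poly_monom)
  then have "{y. y ^ n = (\<Sum>i<n. a i * y ^ i)} = {y. poly p y = 0}" by simp
  then show ?thesis using finite_roots_monic[OF assms monic] by simp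
qed

section \<open>Algebra automorphisms\<close>

lemma alg_aut_integral_equation:
  assumes f: "f \<in> alg_auts phi" and s: "s ^ n = (\<Sum>i<n. phi (c i) * s ^ i)"
  shows "f s ^ n = (\<Sum>i<n. phi (c i) * f s ^ i)"
proof -
  have hom: "is_ring_hom f" and lin: "\<And>c x. f (phi c * x) = phi c * f x"
    using f unfolding alg_auts_def by auto
  have "f (s ^ n) = f (\<Sum>i<n. phi (c i) * s ^ i)" using s by simp
  then show ?thesis by (simp add: ring_hom_power[OF hom] ring_hom_sum[OF hom] lin)
qed

lemma inj_on_restrict_alg_auts:
  assumes S: "\<forall>r. \<exists>c. r = (\<Sum>s\<in>S. phi (c s) * s)"
  shows "inj_on (\<lambda>f. restrict f S) (alg_auts phi)"
proof (rule inj_onI)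
  fix f g assume f: "f \<in> alg_auts phi" and g: "g \<in> alg_auts phi"
    and fg: "restrict f S = restrict g S"
  have expand: "h r = (\<Sum>s\<in>S. phi (c s) * h s)"
    if "h \<in> alg_auts phi" "r = (\<Sum>s\<in>S. phi (c s) * s)" for h r c
  proof -
    have "is_ring_hom h" and "\<And>c x. h (phi c * x) = phi c * h x"
      using that(1) unfolding alg_auts_def by auto
    then show ?thesis unfolding that(2) by (simp add: ring_hom_sum)
  qed
  show "f = g"
  proof
    fix r obtain c where r: "r = (\<Sum>s\<in>S. phi (c s) * s)" using S by blast
    have "\<forall>s\<in>S. f s = g s" using fg by (metis restrict_apply')
    then show "f r = g r" unfolding expand[OF f r] expand[OF g r] by simp
  qed
qed

theorem mainTheorem17:
  fixes phi :: "'k::comm_ring_1 \<Rightarrow> 'r::comm_ring_1"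
  assumes "noetherian_ring TYPE('k)"
    and "is_ring_hom phi"
    and "reduced_ring TYPE('r)"
    and "finite_module_over phi"
  shows "finite (alg_auts phi)"
proof -
  note noeth = assms(1) and hom = assms(2) and red = assms(3)
  obtain S where S: "finite S" "\<forall>r. \<exists>c. r = (\<Sum>s\<in>S. phi (c s) * s)"
    using assms(4) unfolding finite_module_over_def by blast
  have noeth_mod: "noetherian_module phi" by (rule noetherian_module_if_finite_module[OF noeth hom assms(4)])
  have noeth_R: "noetherian_ring TYPE('r)"
    unfolding noetherian_ring_iff_noetherian_module_id by (rule noetherian_module_id[OF hom noeth_mod])
  obtain n c where nc: "\<And>s. s ^ n s = (\<Sum>i<n s. phi (c s i) * s ^ i)"
    using integral_element[OF hom noeth_mod] by metis
  define Z where "Z s = {y. y ^ n s = (\<Sum>i<n s. phi (c s i) * y ^ i)}" for s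
  have "finite (Z s)" for s unfolding Z_def by (rule finite_integral_roots[OF noeth_R red])
  then have "finite (\<Pi>\<^sub>E s\<in>S. Z s)" using S(1) by (rule finite_PiE[rotated])
  have "f s \<in> Z s" if "f \<in> alg_auts phi" for f s
    unfolding Z_def using alg_aut_integral_equation[OF that nc] by simp
  then have "(\<lambda>f. restrict f S) ` alg_auts phi \<subseteq> (\<Pi>\<^sub>E s\<in>S. Z s)" by auto
  then have "finite ((\<lambda>f. restrict f S) ` alg_auts phi)" using \<open>finite (\<Pi>\<^sub>E s\<in>S. Z s)\<close>
    by (rule finite_subset)
  then show ?thesis using inj_on_restrict_alg_auts[OF S(2)] by (rule finite_imageD)
qed

end
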